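(* Let $(G_a,G_b)\sim ER(n;\mathbf{p})$ on vertex set $V$, and assume $\varepsilon\triangleq \frac{p_{01}}{p_{0*}}+\frac{p_{10}}{p_{1*}}<1$. Let $u,v\in V$ with $d_a(u)>d_a(v)$, define $\varphi\triangleq d_a(u)\frac{p_{10}}{p_{1*}}+\bar d_a(v)\frac{p_{01}}{p_{0*}}$, let $k$ be a real number and let $\eta\in(0,\infty)$ (possibly depending on $n$). If \[ d_a(u)-d_a(v)\ \ge\ (1-\varepsilon)^{-1}\Big(k+4\max\big(\eta,\sqrt{\varphi\cdot\eta}\big)\Big), \] then, conditionally on $G_a$, $\Pr[d_b(u)-d_b(v)\le k]\le e^{-\eta}$.
   Context: Correlated Erdős–Rényi model $ER(n;\mathbf{p})$: $G_a$ and $G_b$ are random graphs on the same $n$-vertex set $V$; for each unordered pair $e$ of distinct vertices, independently, $(\mathbf 1[e\in E(G_a)],\mathbf 1[e\in E(G_b)])$ equals $(1,1),(1,0),(0,1),(0,0)$ with probabilities $p_{11},p_{10},p_{01},p_{00}$. Marginals: $p_{1*}=p_{11}+p_{10}$, $p_{0*}=p_{01}+p_{00}$. Notation: $d_a(x)$, $d_b(x)$ are the degrees of $x$ in $G_a$, $G_b$; $\bar d_a(x)=n-1-d_a(x)$ is the complementary degree of $x$ in $G_a$. *)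

theory Defs
  imports "HOL-Probability.Probability"
begin

definition pairs :: "'a set \<Rightarrow> 'a set set" where
  "pairs V = {e. e \<subseteq> V \<and> card e = 2}"

text \<open>Edge-pair distribution: q gives the law of (1[e in G_a], 1[e in G_b]).\<close>
definition p11 :: "(bool \<times> bool) pmf \<Rightarrow> real" where "p11 q = pmf q (True, True)"
definition p10 :: "(bool \<times> bool) pmf \<Rightarrow> real" where "p10 q = pmf q (True, False)"
definition p01 :: "(bool \<times> bool) pmf \<Rightarrow> real" where "p01 q = pmf q (False, True)"
definition p00 :: "(bool \<times> bool) pmf \<Rightarrow> real" where "p00 q = pmf q (False, False)"
definition p1s :: "(bool \<times> bool) pmf \<Rightarrow> real" where "p1s q = p11 q + p10 q"
definition p0s :: "(bool \<times> bool) pmf \<Rightarrow> real" where "p0s q = p01 q + p00 q"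

definition corr_ER :: "'a set \<Rightarrow> (bool \<times> bool) pmf \<Rightarrow> ('a set \<Rightarrow> bool \<times> bool) pmf" where
  "corr_ER V q = Pi_pmf (pairs V) (False, False) (\<lambda>_. q)"

definition graph_a :: "'a set \<Rightarrow> ('a set \<Rightarrow> bool \<times> bool) \<Rightarrow> 'a set set" where
  "graph_a V \<omega> = {e \<in> pairs V. fst (\<omega> e)}"

definition graph_b :: "'a set \<Rightarrow> ('a set \<Rightarrow> bool \<times> bool) \<Rightarrow> 'a set set" where
  "graph_b V \<omega> = {e \<in> pairs V. snd (\<omega> e)}"

definition deg :: "'a set set \<Rightarrow> 'a \<Rightarrow> nat" where
  "deg E x = card {e \<in> E. x \<in> e}"

end

theory Submission
  imports Defs
begin

text \<open>Conditionally on \<open>G\<^sub>a = g\<close> the pairs remain independent, and a pair \<open>e\<close> lies in \<open>G\<^sub>b\<close>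
  with probability \<open>1 - p\<^sub>1\<^sub>0/p\<^sub>1\<^sub>*\<close> if \<open>e \<in> g\<close> and \<open>p\<^sub>0\<^sub>1/p\<^sub>0\<^sub>*\<close> otherwise. Hence
  \<open>d\<^sub>b(u) - d\<^sub>b(v)\<close> is a sum of independent terms \<open>\<delta>\<^sub>e 1[e \<in> G\<^sub>b]\<close> with
  \<open>\<delta>\<^sub>e = 1[u \<in> e] - 1[v \<in> e]\<close>, whose conditional mean is \<open>(1 - \<epsilon>)(d\<^sub>a(u) - d\<^sub>a(v))\<close>.
  A Bernoulli(\<open>r\<close>) variable has moment generating function at most \<open>exp (r s + 2 \<rho> s\<^sup>2)\<close>
  for \<open>|s| \<le> 1\<close>, with \<open>\<rho>\<close> either \<open>r\<close> or \<open>1 - r\<close>. Choosing for \<open>\<rho>\<close> the probability that the pair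
  changes status between \<open>G\<^sub>a\<close> and \<open>G\<^sub>b\<close> bounds the quadratic terms of the Chernoff exponent
  by \<open>2 \<phi> \<lambda>\<^sup>2\<close>, and \<open>\<lambda> = \<eta> / (2 max \<eta> (sqrt (\<phi> \<eta>)))\<close> yields \<open>exp (- \<eta>)\<close>.\<close>

lemma exp_le_quadratic:
  fixes x :: real
  assumes "\<bar>x\<bar> \<le> 1"
  shows "exp x \<le> 1 + x + 2 * x\<^sup>2"
proof (cases "x \<ge> 0")
  case True
  have "0 \<le> x\<^sup>2" by simp
  then show ?thesis using exp_bound[of x] assms True by linarith
next
  case False
  define y where "y = - x"
  have y: "0 \<le> y" "y \<le> 1" using False assms y_def by auto
  have "1 \<le> 1 + 3/2 * y\<^sup>2 + 3/2 * y^3 + y^4" using y by simp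
  also have "\<dots> = (1 + x + 2 * x\<^sup>2) * (1 + y + y\<^sup>2 / 2)"
    unfolding y_def by (simp add: algebra_simps power2_eq_square power3_eq_cube power4_eq_xxxx)
  also have "\<dots> \<le> (1 + x + 2 * x\<^sup>2) * exp y"
  proof (rule mult_left_mono)
    show "1 + y + y\<^sup>2 / 2 \<le> exp y" by (rule exp_lower_Taylor_quadratic[OF y(1)])
    show "0 \<le> 1 + x + 2 * x\<^sup>2"
      using y unfolding y_def power2_eq_square by (simp add: mult_nonneg_nonneg)
  qed
  finally show ?thesis by (simp add: y_def exp_minus field_simps)
qed

lemma bernoulli_mgf_le:
  fixes r s :: real
  assumes "0 \<le> r" "\<bar>s\<bar> \<le> 1"
  shows "1 + r * (exp s - 1) \<le> exp (r * s + 2 * r * s\<^sup>2)"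
proof -
  have "1 + r * (exp s - 1) \<le> exp (r * (exp s - 1))" by (rule exp_ge_add_one_self)
  also have "\<dots> \<le> exp (r * (s + 2 * s\<^sup>2))"
    using exp_le_quadratic[OF assms(2)] assms(1) by (simp add: mult_left_mono)
  finally show ?thesis by (simp add: algebra_simps)
qed

lemma bernoulli_mgf_le_complement:
  fixes r s :: real
  assumes "r \<le> 1" "\<bar>s\<bar> \<le> 1"
  shows "1 + r * (exp s - 1) \<le> exp (r * s + 2 * (1 - r) * s\<^sup>2)"
proof -
  have "1 + r * (exp s - 1) = exp s * (1 + (1 - r) * (exp (- s) - 1))"
    by (simp add: algebra_simps exp_minus field_simps)
  also have "\<dots> \<le> exp s * exp ((1 - r) * (- s) + 2 * (1 - r) * (- s)\<^sup>2)"
    using bernoulli_mgf_le[of "1 - r" "- s"] assms by (intro mult_left_mono) auto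
  also have "\<dots> = exp (r * s + 2 * (1 - r) * s\<^sup>2)" by (simp add: exp_add[symmetric] algebra_simps)
  finally show ?thesis .
qed

lemma chernoff_lower_tail_Pi_pmf:
  fixes f :: "'i \<Rightarrow> 'b \<Rightarrow> real"
  assumes "finite I" "0 \<le> l"
    and integrable: "\<And>i. i \<in> I \<Longrightarrow> integrable (measure_pmf (p i)) (\<lambda>x. exp (- l * f i x))"
    and mgf: "\<And>i. i \<in> I \<Longrightarrow> measure_pmf.expectation (p i) (\<lambda>x. exp (- l * f i x)) \<le> exp (c i)"
  shows "measure_pmf.prob (Pi_pmf I d p) {\<omega>. (\<Sum>i\<in>I. f i (\<omega> i)) \<le> k}
           \<le> exp (l * k + (\<Sum>i\<in>I. c i))"
proof -
  let ?P = "Pi_pmf I d p"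
  define F where "F \<omega> = exp (l * k) * (\<Prod>i\<in>I. exp (- l * f i (\<omega> i)))" for \<omega>
  have F_eq: "F \<omega> = exp (l * (k - (\<Sum>i\<in>I. f i (\<omega> i))))" for \<omega>
    unfolding F_def using assms(1)
    by (simp add: exp_sum[symmetric] exp_add[symmetric] algebra_simps sum_distrib_left sum_negf)
  have "measure_pmf.prob ?P {\<omega>. (\<Sum>i\<in>I. f i (\<omega> i)) \<le> k}
      \<le> measure_pmf.prob ?P {\<omega> \<in> space (measure_pmf ?P). 1 \<le> F \<omega>}"
    using assms(2) by (intro measure_pmf.finite_measure_mono) (auto simp: F_eq)
  also have "\<dots> \<le> measure_pmf.expectation ?P F / 1"
  proof (rule integral_Markov_inequality_measure[of _ _ UNIV])
    show "integrable (measure_pmf ?P) F"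
      unfolding F_def using integrable by (intro integrable_mult_right integrable_prod_Pi_pmf assms(1))
    show "AE \<omega> in measure_pmf ?P. 0 \<le> F \<omega>" by (simp add: F_eq)
  qed auto
  also have "\<dots> = exp (l * k) * (\<Prod>i\<in>I. measure_pmf.expectation (p i) (\<lambda>x. exp (- l * f i x)))"
    unfolding F_def integral_mult_right_zero
    by (subst expectation_prod_Pi_pmf[OF assms(1) integrable]) auto
  also have "\<dots> \<le> exp (l * k) * (\<Prod>i\<in>I. exp (c i))"
    using mgf by (intro mult_left_mono prod_mono conjI integral_nonneg_AE AE_pmfI) auto
  also have "\<dots> = exp (l * k + (\<Sum>i\<in>I. c i))"
    by (simp add: exp_sum[OF assms(1)] exp_add)
  finally show ?thesis .
qed

lemma cond_Pi_pmf_Pi: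
  assumes "finite I" and nonempty: "\<And>i. i \<in> I \<Longrightarrow> set_pmf (p i) \<inter> A i \<noteq> {}"
  shows "cond_pmf (Pi_pmf I d p) (Pi I A) = Pi_pmf I d (\<lambda>i. cond_pmf (p i) (A i))"
proof (rule pmf_eqI)
  fix \<omega>
  have measure_A: "measure_pmf.prob (Pi_pmf I d p) (Pi I A) = (\<Prod>i\<in>I. measure_pmf.prob (p i) (A i))"
    by (rule measure_Pi_pmf_Pi[OF assms(1)])
  have "measure_pmf.prob (Pi_pmf I d p) (Pi I A) \<noteq> 0"
    unfolding measure_A using nonempty by (simp add: measure_pmf_zero_iff assms(1))
  then have nonempty_A: "set_pmf (Pi_pmf I d p) \<inter> Pi I A \<noteq> {}"
    by (simp add: measure_pmf_zero_iff)
  show "pmf (cond_pmf (Pi_pmf I d p) (Pi I A)) \<omega> = pmf (Pi_pmf I d (\<lambda>i. cond_pmf (p i) (A i))) \<omega>"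
  proof (cases "\<omega> \<in> Pi I A")
    case True
    then show ?thesis
      by (simp add: pmf_cond[OF nonempty_A] pmf_cond[OF nonempty] pmf_Pi[OF assms(1)] measure_A
          prod_dividef Pi_iff cong: prod.cong) blast
  next
    case False
    then obtain i where "i \<in> I" "\<omega> i \<notin> A i" by auto
    then show ?thesis
      using assms(1) by (auto simp: pmf_cond[OF nonempty_A] pmf_cond[OF nonempty] pmf_Pi intro!: prod_zero)
  qed
qed

text \<open>\<open>flip_rate q b\<close> is the probability that a pair with status \<open>b\<close> in \<open>G\<^sub>a\<close> has the other
  status in \<open>G\<^sub>b\<close>, so \<open>\<epsilon> = flip_rate q False + flip_rate q True\<close>.\<close>
definition flip_rate :: "(bool \<times> bool) pmf \<Rightarrow> bool \<Rightarrow> real" where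
  "flip_rate q b = (if b then p10 q / p1s q else p01 q / p0s q)"

definition edge_rate :: "(bool \<times> bool) pmf \<Rightarrow> bool \<Rightarrow> real" where
  "edge_rate q b = (if b then 1 - flip_rate q b else flip_rate q b)"

lemma flip_rate_bounds: "0 \<le> flip_rate q b" "flip_rate q b \<le> 1"
proof -
  have fraction: "0 \<le> x / (x + y)" "x / (x + y) \<le> 1" "0 \<le> x / (y + x)" "x / (y + x) \<le> 1"
    if "0 \<le> x" "0 \<le> y" for x y :: real
    using that by (auto simp: divide_le_eq_1 add.commute[of y x])
  show "0 \<le> flip_rate q b" "flip_rate q b \<le> 1"
    using fraction[OF pmf_nonneg pmf_nonneg]
    by (auto simp: flip_rate_def p10_def p1s_def p11_def p01_def p0s_def p00_def)
qed

lemma expectation_cond_fst: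
  fixes q :: "('a \<times> bool) pmf" and f :: "bool \<Rightarrow> real"
  assumes "set_pmf q \<inter> {x. fst x = b} \<noteq> {}"
  shows "measure_pmf.expectation (cond_pmf q {x. fst x = b}) (\<lambda>x. f (snd x)) =
     (pmf q (b, True) * f True + pmf q (b, False) * f False) / (pmf q (b, True) + pmf q (b, False))"
proof -
  have fiber: "{x. fst x = b} = {(b, True), (b, False)}" by auto
  have "measure_pmf.expectation (cond_pmf q {x. fst x = b}) (\<lambda>x. f (snd x)) =
     (\<Sum>x\<in>{(b, True), (b, False)}. pmf (cond_pmf q {x. fst x = b}) x *\<^sub>R f (snd x))"
    by (rule integral_measure_pmf) (use assms in auto)
  also have "\<dots> = (pmf q (b, True) * f True + pmf q (b, False) * f False) / (pmf q (b, True) + pmf q (b, False))"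
    using assms by (simp add: pmf_cond fiber measure_measure_pmf_finite add_divide_distrib)
  finally show ?thesis .
qed

lemma mgf_cond_edge_le:
  fixes q :: "(bool \<times> bool) pmf"
  assumes nonempty: "set_pmf q \<inter> {x. fst x = b} \<noteq> {}" and "\<bar>l * \<delta>\<bar> \<le> 1"
  shows "measure_pmf.expectation (cond_pmf q {x. fst x = b}) (\<lambda>x. exp (- l * (of_bool (snd x) * \<delta>)))
           \<le> exp (- l * \<delta> * edge_rate q b + 2 * l\<^sup>2 * \<delta>\<^sup>2 * flip_rate q b)"
proof -
  define s where "s = - l * \<delta>"
  define r where "r = pmf q (b, True) / (pmf q (b, True) + pmf q (b, False))"
  have s_bound: "\<bar>s\<bar> \<le> 1" using assms(2) by (simp add: s_def)
  obtain y where "(b, y) \<in> set_pmf q" using nonempty by auto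
  then have "0 < pmf q (b, y)" by (simp add: pmf_positive)
  then have total: "0 < pmf q (b, True) + pmf q (b, False)"
    by (cases y) (auto intro: add_pos_nonneg add_nonneg_pos)
  have rate: "r = edge_rate q b"
    using total by (cases b) (simp_all add: r_def edge_rate_def flip_rate_def p10_def p1s_def p11_def
        p01_def p0s_def p00_def field_simps)
  have "measure_pmf.expectation (cond_pmf q {x. fst x = b}) (\<lambda>x. exp (- l * (of_bool (snd x) * \<delta>)))
      = (pmf q (b, True) * exp s + pmf q (b, False)) / (pmf q (b, True) + pmf q (b, False))"
    by (subst expectation_cond_fst[OF nonempty]) (simp add: s_def)
  also have "\<dots> = 1 + r * (exp s - 1)"
    using total by (simp add: r_def field_simps)
  also have "\<dots> \<le> exp (r * s + 2 * flip_rate q b * s\<^sup>2)"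
  proof (cases b)
    case True
    then have flip: "flip_rate q b = 1 - r" using rate by (simp add: edge_rate_def)
    then have "r \<le> 1" using flip_rate_bounds(1)[of q b] by simp
    then show ?thesis using bernoulli_mgf_le_complement[OF _ s_bound] by (simp only: flip)
  next
    case False
    then have flip: "flip_rate q b = r" using rate by (simp add: edge_rate_def)
    then show ?thesis
      using bernoulli_mgf_le[OF _ s_bound] flip_rate_bounds(1)[of q b] by (simp only: flip)
  qed
  also have "\<dots> = exp (- l * \<delta> * edge_rate q b + 2 * l\<^sup>2 * \<delta>\<^sup>2 * flip_rate q b)"
    by (simp add: rate s_def power_mult_distrib algebra_simps)
  finally show ?thesis .
qed

lemma finite_pairs: "finite V \<Longrightarrow> finite (pairs V)"
  unfolding pairs_def by (rule finite_subset[of _ "Pow V"]) auto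

lemma pairs_incident_eq:
  assumes "u \<in> V"
  shows "{e \<in> pairs V. u \<in> e} = (\<lambda>w. {u, w}) ` (V - {u})"
proof
  show "{e \<in> pairs V. u \<in> e} \<subseteq> (\<lambda>w. {u, w}) ` (V - {u})"
  proof
    fix e assume e: "e \<in> {e \<in> pairs V. u \<in> e}"
    then obtain x y where xy: "e = {x, y}" "x \<noteq> y" "e \<subseteq> V"
      by (auto simp: pairs_def card_2_iff)
    then consider "u = x" | "u = y" using e by auto
    then show "e \<in> (\<lambda>w. {u, w}) ` (V - {u})"
      by cases (use xy in \<open>auto simp: insert_commute\<close>)
  qed
  show "(\<lambda>w. {u, w}) ` (V - {u}) \<subseteq> {e \<in> pairs V. u \<in> e}"
    using assms by (auto simp: pairs_def)
qed

lemma card_pairs_incident: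
  assumes "finite V" "u \<in> V"
  shows "card {e \<in> pairs V. u \<in> e} = card V - 1"
proof -
  have "inj_on (\<lambda>w. {u, w}) (V - {u})" by (auto simp: inj_on_def doubleton_eq_iff)
  then show ?thesis using assms by (simp add: pairs_incident_eq card_image)
qed

lemma deg_le_card_minus_one:
  assumes "finite V" "u \<in> V" "g \<subseteq> pairs V"
  shows "deg g u \<le> card V - 1"
proof -
  have "deg g u \<le> card {e \<in> pairs V. u \<in> e}"
    unfolding deg_def using assms by (intro card_mono) (auto simp: finite_pairs)
  then show ?thesis using card_pairs_incident[OF assms(1,2)] by simp
qed

lemma sum_pairs_incident:
  fixes h :: "bool \<Rightarrow> real"
  assumes "finite V" "u \<in> V" "g \<subseteq> pairs V"
  shows "(\<Sum>e\<in>pairs V. of_bool (u \<in> e) * h (e \<in> g))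
           = h True * real (deg g u) + h False * (real (card V - 1) - real (deg g u))"
proof -
  have fin: "finite (pairs V)" using assms(1) by (rule finite_pairs)
  have in_g: "{e \<in> pairs V. u \<in> e \<and> e \<in> g} = {e \<in> g. u \<in> e}" using assms(3) by auto
  have "card {e \<in> pairs V. u \<in> e} = card {e \<in> pairs V. u \<in> e \<and> e \<in> g} + card {e \<in> pairs V. u \<in> e \<and> e \<notin> g}"
    using fin by (subst card_Un_disjoint[symmetric]) (auto intro: arg_cong[where f = card])
  then have not_in_g: "real (card {e \<in> pairs V. u \<in> e \<and> e \<notin> g}) = real (card V - 1) - real (deg g u)"
    using card_pairs_incident[OF assms(1,2)] by (simp add: in_g deg_def)
  have "(\<Sum>e\<in>pairs V. of_bool (u \<in> e) * h (e \<in> g))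
      = (\<Sum>e\<in>pairs V. h True * of_bool (u \<in> e \<and> e \<in> g) + h False * of_bool (u \<in> e \<and> e \<notin> g))"
    by (intro sum.cong) auto
  also have "\<dots> = h True * real (card {e \<in> pairs V. u \<in> e \<and> e \<in> g})
      + h False * real (card {e \<in> pairs V. u \<in> e \<and> e \<notin> g})"
    using fin by (simp add: sum.distrib flip: sum_distrib_left) (simp add: Int_def)
  finally show ?thesis by (simp add: in_g not_in_g deg_def)
qed

lemma sum_pairs_degree_difference:
  fixes h :: "bool \<Rightarrow> real"
  assumes "finite V" "u \<in> V" "v \<in> V" "g \<subseteq> pairs V"
  shows "(\<Sum>e\<in>pairs V. (of_bool (u \<in> e) - of_bool (v \<in> e)) * h (e \<in> g))
           = (h True - h False) * (real (deg g u) - real (deg g v))"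
  using sum_pairs_incident[OF assms(1,2,4), of h] sum_pairs_incident[OF assms(1,3,4), of h]
  by (simp add: left_diff_distrib sum_subtractf algebra_simps)

lemma sum_pairs_degree_difference_square_le:
  fixes h :: "bool \<Rightarrow> real"
  assumes "finite V" "u \<in> V" "v \<in> V" "g \<subseteq> pairs V"
    and "deg g v \<le> deg g u" "h True \<ge> 0" "h False \<ge> 0"
  shows "(\<Sum>e\<in>pairs V. (of_bool (u \<in> e) - of_bool (v \<in> e))\<^sup>2 * h (e \<in> g))
           \<le> 2 * (h True * real (deg g u) + h False * real (card V - 1 - deg g v))"
proof -
  have h_nonneg: "0 \<le> h b" for b using assms(6,7) by (cases b) auto
  have "(\<Sum>e\<in>pairs V. (of_bool (u \<in> e) - of_bool (v \<in> e))\<^sup>2 * h (e \<in> g))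
      \<le> (\<Sum>e\<in>pairs V. (of_bool (u \<in> e) + of_bool (v \<in> e)) * h (e \<in> g))"
    by (intro sum_mono mult_right_mono h_nonneg) auto
  also have "\<dots> = h True * (real (deg g u) + real (deg g v))
      + h False * (2 * real (card V - 1) - real (deg g u) - real (deg g v))"
    using sum_pairs_incident[OF assms(1,2,4), of h] sum_pairs_incident[OF assms(1,3,4), of h]
    by (simp add: distrib_right sum.distrib algebra_simps)
  also have "\<dots> \<le> 2 * (h True * real (deg g u) + h False * real (card V - 1 - deg g v))"
  proof -
    have complement: "real (card V - 1 - deg g v) = real (card V - 1) - real (deg g v)"
      using deg_le_card_minus_one[OF assms(1,3,4)] by (simp add: of_nat_diff)
    have "h b * real (deg g v) \<le> h b * real (deg g u)" for b
      using assms(5) h_nonneg by (simp add: mult_left_mono)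
    from this[of True] this[of False] show ?thesis unfolding complement by (simp add: algebra_simps)
  qed
  finally show ?thesis .
qed

lemma graph_a_subset_pairs: "graph_a V \<omega> \<subseteq> pairs V"
  by (auto simp: graph_a_def)

lemma corr_ER_graph_a_fiber_nonempty:
  assumes "finite V" "set_pmf (corr_ER V q) \<inter> {\<omega>. graph_a V \<omega> = g} \<noteq> {}" "e \<in> pairs V"
  shows "set_pmf q \<inter> {x. fst x = (e \<in> g)} \<noteq> {}"
proof -
  obtain \<omega> where \<omega>: "\<omega> \<in> set_pmf (corr_ER V q)" "graph_a V \<omega> = g" using assms(2) by auto
  have "\<omega> e \<in> set_pmf q"
    using \<omega>(1) assms(3) by (auto simp: corr_ER_def set_Pi_pmf finite_pairs[OF assms(1)] PiE_dflt_def)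
  moreover have "fst (\<omega> e) = (e \<in> g)" using \<omega>(2) assms(3) by (auto simp: graph_a_def)
  ultimately show ?thesis by blast
qed

lemma cond_corr_ER_graph_a:
  assumes "finite V" "set_pmf (corr_ER V q) \<inter> {\<omega>. graph_a V \<omega> = g} \<noteq> {}"
  shows "cond_pmf (corr_ER V q) {\<omega>. graph_a V \<omega> = g}
           = Pi_pmf (pairs V) (False, False) (\<lambda>e. cond_pmf q {x. fst x = (e \<in> g)})"
proof -
  have "g \<subseteq> pairs V" using assms(2) graph_a_subset_pairs by blast
  then have "{\<omega>. graph_a V \<omega> = g} = Pi (pairs V) (\<lambda>e. {x. fst x = (e \<in> g)})"
    by (auto simp: graph_a_def Pi_def)
  then show ?thesis
    unfolding corr_ER_def
    by (simp add: cond_Pi_pmf_Pi finite_pairs assms(1) corr_ER_graph_a_fiber_nonempty[OF assms])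
qed

lemma deg_graph_b_difference:
  assumes "finite V"
  shows "real (deg (graph_b V \<omega>) u) - real (deg (graph_b V \<omega>) v)
           = (\<Sum>e\<in>pairs V. of_bool (snd (\<omega> e)) * (of_bool (u \<in> e) - of_bool (v \<in> e)))"
proof -
  have "real (deg (graph_b V \<omega>) x) = (\<Sum>e\<in>pairs V. of_bool (snd (\<omega> e) \<and> x \<in> e))" for x
  proof -
    have "{e \<in> graph_b V \<omega>. x \<in> e} = pairs V \<inter> {e. snd (\<omega> e) \<and> x \<in> e}"
      by (auto simp: graph_b_def)
    then show ?thesis using finite_pairs[OF assms] by (simp add: deg_def)
  qed
  then show ?thesis by (simp add: of_bool_conj sum_subtractf algebra_simps)
qed

text \<open>The witness is \<open>l = \<eta> / (2 M)\<close> with \<open>M = max \<eta> (sqrt (\<phi> \<eta>))\<close>; \<open>M \<ge> \<eta>\<close> keeps \<open>l \<le> 1/2\<close>.\<close>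
lemma exists_chernoff_parameter:
  fixes \<eta> \<phi> k m :: real
  assumes "0 < \<eta>" "0 \<le> \<phi>" "k + 4 * max \<eta> (sqrt (\<phi> * \<eta>)) \<le> m"
  shows "\<exists>l. 0 \<le> l \<and> l \<le> 1 \<and> l * k - l * m + 4 * l\<^sup>2 * \<phi> \<le> - \<eta>"
proof -
  define M where "M = max \<eta> (sqrt (\<phi> * \<eta>))"
  define l where "l = \<eta> / (2 * M)"
  have "\<eta> \<le> M" by (simp add: M_def)
  then have M_pos: "0 < M" using assms(1) by simp
  have "\<phi> * \<eta> \<le> M\<^sup>2"
  proof -
    have "sqrt (\<phi> * \<eta>) \<le> M" by (simp add: M_def)
    then have "(sqrt (\<phi> * \<eta>))\<^sup>2 \<le> M\<^sup>2" using assms(1,2) by (intro power_mono) auto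
    then show ?thesis using assms(1,2) by simp
  qed
  then have quadratic: "4 * l\<^sup>2 * \<phi> \<le> \<eta>"
    using assms(1) M_pos by (simp add: l_def power2_eq_square field_simps mult_left_mono)
  have l_bounds: "0 \<le> l" "l \<le> 1" using assms(1) M_pos \<open>\<eta> \<le> M\<close> by (simp_all add: l_def)
  have "l * (k + 4 * M) \<le> l * m"
    using assms(3) l_bounds(1) by (intro mult_left_mono) (simp_all add: M_def)
  moreover have "4 * l * M = 2 * \<eta>" using M_pos by (simp add: l_def)
  ultimately show ?thesis using quadratic l_bounds by (intro exI[of _ l]) (simp add: algebra_simps)
qed

lemma cond_degree_difference_lower_tail:
  assumes "finite V" "u \<in> V" "v \<in> V"
    and support: "set_pmf (corr_ER V q) \<inter> {\<omega>. graph_a V \<omega> = g} \<noteq> {}"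
    and "0 \<le> l" "l \<le> 1"
  shows "measure_pmf.prob (cond_pmf (corr_ER V q) {\<omega>. graph_a V \<omega> = g})
           {\<omega>. real (deg (graph_b V \<omega>) u) - real (deg (graph_b V \<omega>) v) \<le> k}
         \<le> exp (l * k - l * (edge_rate q True - edge_rate q False) * (real (deg g u) - real (deg g v))
                  + 2 * l\<^sup>2 * (\<Sum>e\<in>pairs V. (of_bool (u \<in> e) - of_bool (v \<in> e))\<^sup>2 * flip_rate q (e \<in> g)))"
proof -
  define \<delta> where "\<delta> e = (of_bool (u \<in> e) - of_bool (v \<in> e) :: real)" for e
  have g: "g \<subseteq> pairs V" using support graph_a_subset_pairs by blast
  have "measure_pmf.prob (cond_pmf (corr_ER V q) {\<omega>. graph_a V \<omega> = g})
           {\<omega>. real (deg (graph_b V \<omega>) u) - real (deg (graph_b V \<omega>) v) \<le> k}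
      = measure_pmf.prob (Pi_pmf (pairs V) (False, False) (\<lambda>e. cond_pmf q {x. fst x = (e \<in> g)}))
           {\<omega>. (\<Sum>e\<in>pairs V. of_bool (snd (\<omega> e)) * \<delta> e) \<le> k}"
    by (simp add: cond_corr_ER_graph_a assms(1) support deg_graph_b_difference \<delta>_def)
  also have "\<dots> \<le> exp (l * k + (\<Sum>e\<in>pairs V. - l * \<delta> e * edge_rate q (e \<in> g)
                                              + 2 * l\<^sup>2 * (\<delta> e)\<^sup>2 * flip_rate q (e \<in> g)))"
  proof (rule chernoff_lower_tail_Pi_pmf[OF finite_pairs[OF assms(1)] assms(5)])
    fix e assume "e \<in> pairs V"
    show "integrable (cond_pmf q {x. fst x = (e \<in> g)}) (\<lambda>x. exp (- l * (of_bool (snd x) * \<delta> e)))"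
      by (rule integrable_measure_pmf_finite) simp
    have "\<bar>l * \<delta> e\<bar> \<le> 1" using assms(5,6) by (simp add: \<delta>_def abs_mult)
    then show "measure_pmf.expectation (cond_pmf q {x. fst x = (e \<in> g)})
          (\<lambda>x. exp (- l * (of_bool (snd x) * \<delta> e)))
        \<le> exp (- l * \<delta> e * edge_rate q (e \<in> g) + 2 * l\<^sup>2 * (\<delta> e)\<^sup>2 * flip_rate q (e \<in> g))"
      by (intro mgf_cond_edge_le corr_ER_graph_a_fiber_nonempty[OF assms(1) support] \<open>e \<in> pairs V\<close>)
  qed
  also have "(\<Sum>e\<in>pairs V. - l * \<delta> e * edge_rate q (e \<in> g) + 2 * l\<^sup>2 * (\<delta> e)\<^sup>2 * flip_rate q (e \<in> g))
      = - l * (\<Sum>e\<in>pairs V. \<delta> e * edge_rate q (e \<in> g))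
        + 2 * l\<^sup>2 * (\<Sum>e\<in>pairs V. (\<delta> e)\<^sup>2 * flip_rate q (e \<in> g))"
    by (simp only: sum.distrib sum_distrib_left mult.assoc)
  also have "(\<Sum>e\<in>pairs V. \<delta> e * edge_rate q (e \<in> g))
      = (edge_rate q True - edge_rate q False) * (real (deg g u) - real (deg g v))"
    unfolding \<delta>_def by (rule sum_pairs_degree_difference[OF assms(1-3) g])
  finally show ?thesis by (simp add: \<delta>_def algebra_simps)
qed

theorem lemma4p2:
  fixes V :: "'a set" and q :: "(bool \<times> bool) pmf" and g :: "'a set set"
    and u v :: 'a and k \<eta> :: real
  assumes "finite V"
    and "p01 q / p0s q + p10 q / p1s q < 1"
    and "u \<in> V" and "v \<in> V"
    and "set_pmf (corr_ER V q) \<inter> {\<omega>. graph_a V \<omega> = g} \<noteq> {}"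
    and "deg g u > deg g v"
    and "\<eta> > 0"
    and "real (deg g u) - real (deg g v) \<ge>
           inverse (1 - (p01 q / p0s q + p10 q / p1s q)) *
           (k + 4 * max \<eta> (sqrt ((real (deg g u) * (p10 q / p1s q)
                 + real (card V - 1 - deg g v) * (p01 q / p0s q)) * \<eta>)))"
  shows "measure_pmf.prob (cond_pmf (corr_ER V q) {\<omega>. graph_a V \<omega> = g})
           {\<omega>. real (deg (graph_b V \<omega>) u) - real (deg (graph_b V \<omega>) v) \<le> k}
         \<le> exp (- \<eta>)"
proof -
  define \<epsilon> where "\<epsilon> = flip_rate q False + flip_rate q True"
  define \<phi> where "\<phi> = real (deg g u) * flip_rate q True + real (card V - 1 - deg g v) * flip_rate q False"
  define \<Delta> where "\<Delta> = real (deg g u) - real (deg g v)"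
  have "0 < 1 - \<epsilon>" using assms(2) by (simp add: \<epsilon>_def flip_rate_def)
  moreover have "inverse (1 - \<epsilon>) * (k + 4 * max \<eta> (sqrt (\<phi> * \<eta>))) \<le> \<Delta>"
    using assms(8) by (simp only: \<epsilon>_def \<phi>_def \<Delta>_def flip_rate_def if_True if_False)
  ultimately have "k + 4 * max \<eta> (sqrt (\<phi> * \<eta>)) \<le> \<Delta> * (1 - \<epsilon>)"
    by (simp add: field_simps)
  moreover have "0 \<le> \<phi>" using flip_rate_bounds(1)[of q] by (simp add: \<phi>_def)
  ultimately obtain l where l: "0 \<le> l" "l \<le> 1" "l * k - l * (\<Delta> * (1 - \<epsilon>)) + 4 * l\<^sup>2 * \<phi> \<le> - \<eta>"
    using exists_chernoff_parameter[OF assms(7)] by blast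
  let ?S = "\<Sum>e\<in>pairs V. (of_bool (u \<in> e) - of_bool (v \<in> e))\<^sup>2 * flip_rate q (e \<in> g)"
  have g: "g \<subseteq> pairs V" using assms(5) graph_a_subset_pairs by blast
  have spread: "2 * l\<^sup>2 * ?S \<le> 2 * l\<^sup>2 * (2 * \<phi>)"
    using sum_pairs_degree_difference_square_le[OF assms(1,3,4) g, of "flip_rate q"] assms(6)
      flip_rate_bounds(1) by (intro mult_left_mono) (simp_all add: \<phi>_def mult.commute)
  have "edge_rate q True - edge_rate q False = 1 - \<epsilon>" by (simp add: edge_rate_def \<epsilon>_def)
  then have "measure_pmf.prob (cond_pmf (corr_ER V q) {\<omega>. graph_a V \<omega> = g})
           {\<omega>. real (deg (graph_b V \<omega>) u) - real (deg (graph_b V \<omega>) v) \<le> k}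
      \<le> exp (l * k - l * (1 - \<epsilon>) * \<Delta> + 2 * l\<^sup>2 * ?S)"
    using cond_degree_difference_lower_tail[OF assms(1,3-5) l(1,2), of k] by (simp only: \<Delta>_def)
  also have "\<dots> \<le> exp (- \<eta>)"
    using l(3) spread by (simp add: algebra_simps)
  finally show ?thesis .
qed

end
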